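(* Let $\Omega\subset\mathbb{R}^2$ be a domain, and let $p,q$ be real valued functions with $p\in C^2(\Omega)$ and $p>0$. Let $u_0\in C^2(\Omega)$ be a positive solution of $(\operatorname{div}p\operatorname{grad}+q)u=0$ in $\Omega$, and put $f=p^{1/2}u_0$. Let $W=W_1+iW_2\in C^2(\Omega)$ (with $W_1,W_2$ real valued) be a solution of $W_{\bar z}=\frac{f_{\bar z}}{f}\overline{W}$ in $\Omega$. Then: (i) $u=p^{-1/2}W_1$ is a solution of $(\operatorname{div}p\operatorname{grad}+q)u=0$ in $\Omega$; (ii) $v=p^{1/2}W_2$ is a solution of $(\operatorname{div}\frac1p\operatorname{grad}+q_1)v=0$ in $\Omega$, where $$q_1=-\frac1p\left(\frac qp+2\Big\langle\frac{\nabla p}{p},\frac{\nabla u_0}{u_0}\Big\rangle+2\Big(\frac{\nabla u_0}{u_0}\Big)^2\right).$$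
   Context: $\partial_{\bar z}=\frac12(\partial_x+i\partial_y)$. $\langle\cdot,\cdot\rangle$ is the Euclidean inner product in $\mathbb{R}^2$, and $(\nabla h)^2=h_x^2+h_y^2$. $(\operatorname{div}a\operatorname{grad}+b)\varphi=\operatorname{div}(a\nabla\varphi)+b\varphi$. *)

theory Defs
  imports "HOL-Analysis.Analysis"
begin

text \<open>The plane R^2 is identified with the complex plane: z = x + i y.\<close>

definition px :: "(complex \<Rightarrow> 'a::real_normed_vector) \<Rightarrow> complex \<Rightarrow> 'a" where
  "px f z = vector_derivative (\<lambda>t::real. f (z + complex_of_real t)) (at 0)"

definition py :: "(complex \<Rightarrow> 'a::real_normed_vector) \<Rightarrow> complex \<Rightarrow> 'a" where
  "py f z = vector_derivative (\<lambda>t::real. f (z + \<i> * complex_of_real t)) (at 0)"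

definition C1_on :: "complex set \<Rightarrow> (complex \<Rightarrow> 'a::real_normed_vector) \<Rightarrow> bool" where
  "C1_on S f \<longleftrightarrow> (\<forall>z\<in>S. f differentiable (at z)) \<and>
     continuous_on S (px f) \<and> continuous_on S (py f)"

definition C2_on :: "complex set \<Rightarrow> (complex \<Rightarrow> 'a::real_normed_vector) \<Rightarrow> bool" where
  "C2_on S f \<longleftrightarrow> C1_on S f \<and> C1_on S (px f) \<and> C1_on S (py f)"

definition dbar :: "(complex \<Rightarrow> complex) \<Rightarrow> complex \<Rightarrow> complex" where
  "dbar W z = (px W z + \<i> * py W z) / 2"

definition div_grad_op :: "(complex \<Rightarrow> real) \<Rightarrow> (complex \<Rightarrow> real) \<Rightarrow> (complex \<Rightarrow> real) \<Rightarrow> complex \<Rightarrow> real" where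
  "div_grad_op a b \<phi> z = px (\<lambda>w. a w * px \<phi> w) z + py (\<lambda>w. a w * py \<phi> w) z + b z * \<phi> z"

end

theory Submission
  imports Defs
begin

(* Write W = A + i B and f = sqrt p * u0. In real form the Vekua equation W_zbar = (f_zbar / f) conj W reads
     A_x - B_y = (f_x A + f_y B) / f,    A_y + B_x = (f_y A - f_x B) / f;
   differentiating once more and using the symmetry of the mixed partials of B and of log f gives the
   Schroedinger equations  Delta A = (Delta f / f) A  and  Delta B = f Delta (1/f) B.
   The Liouville substitution u = phi / sqrt a turns (div a grad + b) u into sqrt a (Delta phi - V phi)
   with potential V = Delta (sqrt a) / sqrt a - b / a. Since u0 solves the equation, Delta f / f is the
   potential of (p, q), which gives (i); a direct computation shows that f Delta (1/f) is the potential
   of (1/p, q1), which gives (ii). *)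

section \<open>Partial derivatives via the Frechet derivative\<close>

lemma vector_derivative_line:
  assumes "(f has_derivative f') (at z)"
  shows "vector_derivative (\<lambda>t::real. f (z + e * complex_of_real t)) (at 0) = f' e"
proof (rule vector_derivative_at)
  have "((\<lambda>t::real. z + e * complex_of_real t) has_derivative (\<lambda>t. t *\<^sub>R e)) (at 0)"
    by (auto intro!: derivative_eq_intros simp: scaleR_conv_of_real mult.commute)
  with assms have "((\<lambda>t::real. f (z + e * complex_of_real t)) has_derivative (\<lambda>t. f' (t *\<^sub>R e))) (at 0)"
    using has_derivative_compose by fastforce
  moreover have "f' (t *\<^sub>R e) = t *\<^sub>R f' e" for t
    using linear_scale[OF has_derivative_linear[OF assms]] .
  ultimately show "((\<lambda>t::real. f (z + e * complex_of_real t)) has_vector_derivative f' e) (at 0)"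
    unfolding has_vector_derivative_def by simp
qed

lemma px_has_derivative: "(f has_derivative f') (at z) \<Longrightarrow> px f z = f' 1"
  using vector_derivative_line[where e = 1] by (simp add: px_def)

lemma py_has_derivative: "(f has_derivative f') (at z) \<Longrightarrow> py f z = f' \<i>"
  using vector_derivative_line[where e = \<i>] by (simp add: py_def)

lemma has_derivative_partials:
  assumes "f differentiable (at z)"
  shows "(f has_derivative (\<lambda>v. Re v *\<^sub>R px f z + Im v *\<^sub>R py f z)) (at z)"
proof -
  obtain f' where f': "(f has_derivative f') (at z)"
    using assms by (auto simp: differentiable_def)
  have "f' v = Re v *\<^sub>R px f z + Im v *\<^sub>R py f z" for v
  proof -
    have "v = Re v *\<^sub>R 1 + Im v *\<^sub>R \<i>"
      by (simp add: complex_eq_iff)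
    then have "f' v = f' (Re v *\<^sub>R 1 + Im v *\<^sub>R \<i>)"
      by (rule arg_cong)
    then show ?thesis
      using has_derivative_linear[OF f'] px_has_derivative[OF f'] py_has_derivative[OF f']
      by (simp add: linear_add linear_scale)
  qed
  then have "f' = (\<lambda>v. Re v *\<^sub>R px f z + Im v *\<^sub>R py f z)"
    by (rule ext)
  with f' show ?thesis
    by simp
qed

lemma px_const [simp]: "px (\<lambda>w. c) z = 0"
  by (simp add: px_has_derivative[OF has_derivative_const])

lemma py_const [simp]: "py (\<lambda>w. c) z = 0"
  by (simp add: py_has_derivative[OF has_derivative_const])

lemma px_add:
  "f differentiable (at z) \<Longrightarrow> g differentiable (at z) \<Longrightarrow> px (\<lambda>w. f w + g w) z = px f z + px g z"
  by (simp add: px_has_derivative[OF has_derivative_add[OF has_derivative_partials has_derivative_partials]])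

lemma py_add:
  "f differentiable (at z) \<Longrightarrow> g differentiable (at z) \<Longrightarrow> py (\<lambda>w. f w + g w) z = py f z + py g z"
  by (simp add: py_has_derivative[OF has_derivative_add[OF has_derivative_partials has_derivative_partials]])

lemma px_minus: "f differentiable (at z) \<Longrightarrow> px (\<lambda>w. - f w) z = - px f z"
  by (simp add: px_has_derivative[OF has_derivative_minus[OF has_derivative_partials]])

lemma py_minus: "f differentiable (at z) \<Longrightarrow> py (\<lambda>w. - f w) z = - py f z"
  by (simp add: py_has_derivative[OF has_derivative_minus[OF has_derivative_partials]])

lemma px_diff:
  "f differentiable (at z) \<Longrightarrow> g differentiable (at z) \<Longrightarrow> px (\<lambda>w. f w - g w) z = px f z - px g z"
  by (simp add: px_has_derivative[OF has_derivative_diff[OF has_derivative_partials has_derivative_partials]])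

lemma py_diff:
  "f differentiable (at z) \<Longrightarrow> g differentiable (at z) \<Longrightarrow> py (\<lambda>w. f w - g w) z = py f z - py g z"
  by (simp add: py_has_derivative[OF has_derivative_diff[OF has_derivative_partials has_derivative_partials]])

lemma px_mult:
  fixes f g :: "complex \<Rightarrow> 'a::real_normed_algebra"
  shows "f differentiable (at z) \<Longrightarrow> g differentiable (at z) \<Longrightarrow>
    px (\<lambda>w. f w * g w) z = f z * px g z + px f z * g z"
  by (simp add: px_has_derivative[OF has_derivative_mult[OF has_derivative_partials has_derivative_partials]])

lemma py_mult:
  fixes f g :: "complex \<Rightarrow> 'a::real_normed_algebra"
  shows "f differentiable (at z) \<Longrightarrow> g differentiable (at z) \<Longrightarrow>
    py (\<lambda>w. f w * g w) z = f z * py g z + py f z * g z"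
  by (simp add: py_has_derivative[OF has_derivative_mult[OF has_derivative_partials has_derivative_partials]])

lemma px_divide:
  fixes f g :: "complex \<Rightarrow> 'a::real_normed_field"
  shows "f differentiable (at z) \<Longrightarrow> g differentiable (at z) \<Longrightarrow> g z \<noteq> 0 \<Longrightarrow>
    px (\<lambda>w. f w / g w) z = (px f z * g z - f z * px g z) / (g z)\<^sup>2"
  by (simp add: px_has_derivative[OF has_derivative_divide[OF has_derivative_partials has_derivative_partials]]
      field_simps power2_eq_square)

lemma py_divide:
  fixes f g :: "complex \<Rightarrow> 'a::real_normed_field"
  shows "f differentiable (at z) \<Longrightarrow> g differentiable (at z) \<Longrightarrow> g z \<noteq> 0 \<Longrightarrow>
    py (\<lambda>w. f w / g w) z = (py f z * g z - f z * py g z) / (g z)\<^sup>2"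
  by (simp add: py_has_derivative[OF has_derivative_divide[OF has_derivative_partials has_derivative_partials]]
      field_simps power2_eq_square)

lemma px_power:
  fixes f :: "complex \<Rightarrow> real"
  shows "f differentiable (at z) \<Longrightarrow> px (\<lambda>w. f w ^ n) z = n * f z ^ (n - 1) * px f z"
  by (simp add: px_has_derivative[OF has_derivative_power[OF has_derivative_partials]])

lemma py_power:
  fixes f :: "complex \<Rightarrow> real"
  shows "f differentiable (at z) \<Longrightarrow> py (\<lambda>w. f w ^ n) z = n * f z ^ (n - 1) * py f z"
  by (simp add: py_has_derivative[OF has_derivative_power[OF has_derivative_partials]])

lemma px_compose:
  assumes "f differentiable (at z)" "(h has_real_derivative h') (at (f z))"
  shows "px (\<lambda>w. h (f w)) z = h' * px f z"
  by (simp add: px_has_derivative[OF DERIV_compose_FDERIV[OF assms(2) has_derivative_partials[OF assms(1)]]])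

lemma py_compose:
  assumes "f differentiable (at z)" "(h has_real_derivative h') (at (f z))"
  shows "py (\<lambda>w. h (f w)) z = h' * py f z"
  by (simp add: py_has_derivative[OF DERIV_compose_FDERIV[OF assms(2) has_derivative_partials[OF assms(1)]]])

lemma px_sqrt:
  assumes "f differentiable (at z)" "f z > 0"
  shows "px (\<lambda>w. sqrt (f w)) z = px f z / (2 * sqrt (f z))"
  using px_compose[OF assms(1) DERIV_real_sqrt[OF assms(2)]] by (simp add: field_simps)

lemma py_sqrt:
  assumes "f differentiable (at z)" "f z > 0"
  shows "py (\<lambda>w. sqrt (f w)) z = py f z / (2 * sqrt (f z))"
  using py_compose[OF assms(1) DERIV_real_sqrt[OF assms(2)]] by (simp add: field_simps)

lemma px_bounded_linear:
  "bounded_linear L \<Longrightarrow> f differentiable (at z) \<Longrightarrow> px (\<lambda>w. L (f w)) z = L (px f z)"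
  by (simp add: px_has_derivative[OF bounded_linear.has_derivative[OF _ has_derivative_partials]])

lemma py_bounded_linear:
  "bounded_linear L \<Longrightarrow> f differentiable (at z) \<Longrightarrow> py (\<lambda>w. L (f w)) z = L (py f z)"
  by (simp add: py_has_derivative[OF bounded_linear.has_derivative[OF _ has_derivative_partials]])

lemma vector_derivative_line_cong:
  assumes "open S" "z \<in> S" "\<And>w. w \<in> S \<Longrightarrow> f w = g w"
  shows "vector_derivative (\<lambda>t::real. f (z + e * complex_of_real t)) (at 0) =
    vector_derivative (\<lambda>t::real. g (z + e * complex_of_real t)) (at 0)"
proof -
  let ?T = "(\<lambda>t::real. z + e * complex_of_real t) -` S"
  have T: "open ?T" "0 \<in> ?T"
    using assms(2) by (auto intro: continuous_open_vimage[OF assms(1)] continuous_intros)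
  have "((\<lambda>t. f (z + e * complex_of_real t)) has_vector_derivative d) (at 0) \<longleftrightarrow>
      ((\<lambda>t. g (z + e * complex_of_real t)) has_vector_derivative d) (at 0)" for d
    by (rule iffI; erule has_vector_derivative_transform_within_open[OF _ T]; simp add: assms(3))
  then show ?thesis
    by (simp add: vector_derivative_def)
qed

lemma px_cong:
  assumes "open S" "z \<in> S" "\<And>w. w \<in> S \<Longrightarrow> f w = g w"
  shows "px f z = px g z"
  using vector_derivative_line_cong[OF assms, where e = 1] by (simp add: px_def)

lemma py_cong:
  assumes "open S" "z \<in> S" "\<And>w. w \<in> S \<Longrightarrow> f w = g w"
  shows "py f z = py g z"
  using vector_derivative_line_cong[OF assms, where e = \<i>] by (simp add: py_def)

lemma div_grad_op_cong:
  assumes S: "open S" and z: "z \<in> S" and eq: "\<And>w. w \<in> S \<Longrightarrow> \<phi> w = \<psi> w"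
  shows "div_grad_op a b \<phi> z = div_grad_op a b \<psi> z"
proof -
  have d: "px \<phi> w = px \<psi> w" "py \<phi> w = py \<psi> w" if "w \<in> S" for w
    by (rule px_cong[OF S that], erule eq, rule py_cong[OF S that], erule eq)
  have "px (\<lambda>w. a w * px \<phi> w) z = px (\<lambda>w. a w * px \<psi> w) z"
    "py (\<lambda>w. a w * py \<phi> w) z = py (\<lambda>w. a w * py \<psi> w) z"
    by (rule px_cong[OF S z], simp add: d, rule py_cong[OF S z], simp add: d)
  then show ?thesis
    using eq[OF z] by (simp add: div_grad_op_def)
qed

lemma C1_on_cong:
  assumes S: "open S" and eq: "\<And>w. w \<in> S \<Longrightarrow> f w = g w" and f: "C1_on S f"
  shows "C1_on S g"
proof -
  have "px f w = px g w" "py f w = py g w" if "w \<in> S" for w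
    by (rule px_cong[OF S that], erule eq, rule py_cong[OF S that], erule eq)
  moreover have "g differentiable (at w)" if w: "w \<in> S" for w
  proof -
    obtain D where "(f has_derivative D) (at w)"
      using f w by (auto simp: C1_on_def differentiable_def)
    then have "(g has_derivative D) (at w)"
      by (rule has_derivative_transform_within_open[OF _ S w]) (rule eq)
    then show ?thesis
      by (rule differentiableI)
  qed
  ultimately show ?thesis
    using f by (auto simp: C1_on_def cong: continuous_on_cong)
qed

lemma C2_on_differentiable:
  assumes "C2_on S f" "z \<in> S"
  shows "f differentiable (at z)" "px f differentiable (at z)" "py f differentiable (at z)"
  using assms by (auto simp: C2_on_def C1_on_def)

lemma C1_on_continuous_on: "C1_on S f \<Longrightarrow> continuous_on S f"
  unfolding C1_on_def by (meson continuous_at_imp_continuous_on differentiable_imp_continuous_within)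

lemma C1_on_add:
  assumes f: "C1_on S f" and g: "C1_on S g"
  shows "C1_on S (\<lambda>w. f w + g w)"
  unfolding C1_on_def
proof (intro conjI ballI)
  show "(\<lambda>w. f w + g w) differentiable (at z)" if "z \<in> S" for z
    using f g that by (auto simp: C1_on_def)
  show "continuous_on S (px (\<lambda>w. f w + g w))"
    using f g by (auto simp: C1_on_def px_add intro!: continuous_on_add cong: continuous_on_cong)
  show "continuous_on S (py (\<lambda>w. f w + g w))"
    using f g by (auto simp: C1_on_def py_add intro!: continuous_on_add cong: continuous_on_cong)
qed

lemma C1_on_mult:
  fixes f g :: "complex \<Rightarrow> 'a::real_normed_algebra"
  assumes f: "C1_on S f" and g: "C1_on S g"
  shows "C1_on S (\<lambda>w. f w * g w)"
  unfolding C1_on_def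
proof (intro conjI ballI)
  note cont = C1_on_continuous_on[OF f] C1_on_continuous_on[OF g]
  show "(\<lambda>w. f w * g w) differentiable (at z)" if "z \<in> S" for z
    using f g that by (auto simp: C1_on_def)
  show "continuous_on S (px (\<lambda>w. f w * g w))"
    using f g cont
    by (auto simp: C1_on_def px_mult intro!: continuous_intros cong: continuous_on_cong)
  show "continuous_on S (py (\<lambda>w. f w * g w))"
    using f g cont
    by (auto simp: C1_on_def py_mult intro!: continuous_intros cong: continuous_on_cong)
qed

lemma C1_on_compose:
  fixes f :: "complex \<Rightarrow> real"
  assumes f: "C1_on S f" and fT: "f ` S \<subseteq> T"
    and h: "\<And>x. x \<in> T \<Longrightarrow> (h has_real_derivative h' x) (at x)" and h': "continuous_on T h'"
  shows "C1_on S (\<lambda>w. h (f w))"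
  unfolding C1_on_def
proof (intro conjI ballI)
  have fS: "f w \<in> T" "f differentiable (at w)" if "w \<in> S" for w
    using that fT f by (auto simp: C1_on_def)
  have "continuous_on S (\<lambda>w. h' (f w))"
    using continuous_on_compose2[OF h' C1_on_continuous_on[OF f] fT] .
  then have cont: "continuous_on S (\<lambda>w. h' (f w) * px f w)" "continuous_on S (\<lambda>w. h' (f w) * py f w)"
    using f by (auto simp: C1_on_def intro!: continuous_intros)
  show "(\<lambda>w. h (f w)) differentiable (at z)" if "z \<in> S" for z
    using DERIV_compose_FDERIV[OF h has_derivative_partials] fS that
    by (metis differentiableI)
  have "px (\<lambda>w. h (f w)) w = h' (f w) * px f w" "py (\<lambda>w. h (f w)) w = h' (f w) * py f w"
    if "w \<in> S" for w
    using px_compose py_compose fS[OF that] h[OF fS(1)[OF that]] by blast+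
  with cont show "continuous_on S (px (\<lambda>w. h (f w)))" "continuous_on S (py (\<lambda>w. h (f w)))"
    by (simp_all cong: continuous_on_cong)
qed

lemma C1_on_bounded_linear:
  assumes L: "bounded_linear L" and f: "C1_on S f"
  shows "C1_on S (\<lambda>w. L (f w))"
  unfolding C1_on_def
proof (intro conjI ballI)
  show "(\<lambda>w. L (f w)) differentiable (at z)" if "z \<in> S" for z
    using f that bounded_linear_imp_differentiable[OF L] differentiable_chain_at
    by (fastforce simp: C1_on_def o_def)
  have "continuous_on S (\<lambda>w. L (px f w))" "continuous_on S (\<lambda>w. L (py f w))"
    using f linear_continuous_on[OF L] by (auto simp: C1_on_def intro: continuous_on_compose2)
  then show "continuous_on S (px (\<lambda>w. L (f w)))" "continuous_on S (py (\<lambda>w. L (f w)))"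
    using f by (auto simp: C1_on_def px_bounded_linear[OF L] py_bounded_linear[OF L]
        cong: continuous_on_cong)
qed

lemma C2_on_mult:
  fixes f g :: "complex \<Rightarrow> 'a::real_normed_algebra"
  assumes S: "open S" and f: "C2_on S f" and g: "C2_on S g"
  shows "C2_on S (\<lambda>w. f w * g w)"
proof -
  have C1: "C1_on S f" "C1_on S (px f)" "C1_on S (py f)" "C1_on S g" "C1_on S (px g)" "C1_on S (py g)"
    using f g by (auto simp: C2_on_def)
  have "C1_on S (px (\<lambda>w. f w * g w))"
    by (rule C1_on_cong[OF S _ C1_on_add[OF C1_on_mult[OF C1(1,5)] C1_on_mult[OF C1(2,4)]]])
      (use C2_on_differentiable[OF f] C2_on_differentiable[OF g] in \<open>simp add: px_mult\<close>)
  moreover have "C1_on S (py (\<lambda>w. f w * g w))"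
    by (rule C1_on_cong[OF S _ C1_on_add[OF C1_on_mult[OF C1(1,6)] C1_on_mult[OF C1(3,4)]]])
      (use C2_on_differentiable[OF f] C2_on_differentiable[OF g] in \<open>simp add: py_mult\<close>)
  ultimately show ?thesis
    using C1_on_mult[OF C1(1,4)] by (simp add: C2_on_def)
qed

lemma C2_on_compose:
  fixes f :: "complex \<Rightarrow> real"
  assumes S: "open S" and f: "C2_on S f" and fT: "f ` S \<subseteq> T"
    and h: "\<And>x. x \<in> T \<Longrightarrow> (h has_real_derivative h' x) (at x)"
    and h': "\<And>x. x \<in> T \<Longrightarrow> (h' has_real_derivative h'' x) (at x)"
    and h'': "continuous_on T h''"
  shows "C2_on S (\<lambda>w. h (f w))"
proof -
  have C1: "C1_on S f" "C1_on S (px f)" "C1_on S (py f)"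
    using f by (auto simp: C2_on_def)
  have cont_h': "continuous_on T h'"
    using h' by (meson DERIV_isCont continuous_at_imp_continuous_on)
  have h'f: "C1_on S (\<lambda>w. h' (f w))"
    using C1_on_compose[OF C1(1) fT h' h''] .
  have hf: "px (\<lambda>w. h (f w)) w = h' (f w) * px f w" "py (\<lambda>w. h (f w)) w = h' (f w) * py f w"
    if "w \<in> S" for w
    using px_compose py_compose C2_on_differentiable(1)[OF f that] h that fT by blast+
  have "C1_on S (px (\<lambda>w. h (f w)))"
    by (rule C1_on_cong[OF S _ C1_on_mult[OF h'f C1(2)]]) (simp add: hf)
  moreover have "C1_on S (py (\<lambda>w. h (f w)))"
    by (rule C1_on_cong[OF S _ C1_on_mult[OF h'f C1(3)]]) (simp add: hf)
  ultimately show ?thesis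
    using C1_on_compose[OF C1(1) fT h cont_h'] by (simp add: C2_on_def)
qed

lemma C2_on_sqrt:
  assumes "open S" "C2_on S f" "\<forall>w\<in>S. f w > 0"
  shows "C2_on S (\<lambda>w. sqrt (f w))"
  by (rule C2_on_compose[OF assms(1,2), where T = "{0<..}"
        and h' = "\<lambda>x. 1 / (2 * sqrt x)" and h'' = "\<lambda>x. - 1 / (4 * x * sqrt x)"])
    (use assms(3) in \<open>auto intro!: derivative_eq_intros continuous_intros simp: field_simps\<close>)

lemma C2_on_inverse:
  fixes f :: "complex \<Rightarrow> real"
  assumes "open S" "C2_on S f" "\<forall>w\<in>S. f w > 0"
  shows "C2_on S (\<lambda>w. 1 / f w)"
  by (rule C2_on_compose[OF assms(1,2), where T = "{0<..}"
        and h' = "\<lambda>x. - 1 / x\<^sup>2" and h'' = "\<lambda>x. 2 / x ^ 3"])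
    (use assms(3) in \<open>auto intro!: derivative_eq_intros continuous_intros
      simp: field_simps power2_eq_square power3_eq_cube\<close>)

lemma C2_on_bounded_linear:
  assumes S: "open S" and L: "bounded_linear L" and f: "C2_on S f"
  shows "C2_on S (\<lambda>w. L (f w))"
proof -
  have C1: "C1_on S f" "C1_on S (px f)" "C1_on S (py f)"
    using f by (auto simp: C2_on_def)
  have "C1_on S (px (\<lambda>w. L (f w)))"
    by (rule C1_on_cong[OF S _ C1_on_bounded_linear[OF L C1(2)]])
      (simp add: px_bounded_linear[OF L] C2_on_differentiable[OF f])
  moreover have "C1_on S (py (\<lambda>w. L (f w)))"
    by (rule C1_on_cong[OF S _ C1_on_bounded_linear[OF L C1(3)]])
      (simp add: py_bounded_linear[OF L] C2_on_differentiable[OF f])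
  ultimately show ?thesis
    using C1_on_bounded_linear[OF L C1(1)] by (simp add: C2_on_def)
qed

section \<open>Symmetry of mixed partial derivatives\<close>

lemma has_real_derivative_px_line:
  fixes g :: "complex \<Rightarrow> real"
  assumes "g differentiable (at (a + of_real x))"
  shows "((\<lambda>t. g (a + of_real t)) has_real_derivative px g (a + of_real x)) (at x)"
proof -
  have "((\<lambda>t. a + of_real t) has_derivative of_real) (at x)"
    by (auto intro!: derivative_eq_intros)
  from has_derivative_compose[OF this has_derivative_partials[OF assms]]
  show ?thesis
    by (rule has_derivative_imp_has_field_derivative) simp
qed

lemma has_real_derivative_py_line:
  fixes g :: "complex \<Rightarrow> real"
  assumes "g differentiable (at (a + \<i> * of_real x))"
  shows "((\<lambda>t. g (a + \<i> * of_real t)) has_real_derivative py g (a + \<i> * of_real x)) (at x)"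
proof -
  have "((\<lambda>t. a + \<i> * of_real t) has_derivative (\<lambda>t. \<i> * of_real t)) (at x)"
    by (auto intro!: derivative_eq_intros)
  from has_derivative_compose[OF this has_derivative_partials[OF assms]]
  show ?thesis
    by (rule has_derivative_imp_has_field_derivative) simp
qed

lemma second_difference_px_py:
  fixes g :: "complex \<Rightarrow> real"
  assumes h: "h > 0"
    and diff: "\<And>x y. x \<in> {0..h} \<Longrightarrow> y \<in> {0..h} \<Longrightarrow>
      g differentiable (at (z + of_real x + \<i> * of_real y)) \<and>
      px g differentiable (at (z + of_real x + \<i> * of_real y))"
  shows "\<exists>x\<in>{0<..<h}. \<exists>y\<in>{0<..<h}. g (z + of_real h + \<i> * of_real h) - g (z + \<i> * of_real h)
    - g (z + of_real h) + g z = h\<^sup>2 * py (px g) (z + of_real x + \<i> * of_real y)"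
proof -
  have "\<exists>x. 0 < x \<and> x < h \<and>
      (g (z + \<i> * of_real h + of_real h) - g (z + of_real h))
        - (g (z + \<i> * of_real h + of_real 0) - g (z + of_real 0))
      = (h - 0) * (px g (z + \<i> * of_real h + of_real x) - px g (z + of_real x))"
    using diff[of _ 0] diff[of _ h] h
    by (intro MVT2 h DERIV_diff has_real_derivative_px_line) (auto simp: ac_simps)
  then obtain x where x: "0 < x" "x < h"
    and Dx: "g (z + of_real h + \<i> * of_real h) - g (z + \<i> * of_real h) - g (z + of_real h) + g z
      = h * (px g (z + of_real x + \<i> * of_real h) - px g (z + of_real x))"
    by (auto simp: ac_simps)
  have "\<exists>y. 0 < y \<and> y < h \<and> px g (z + of_real x + \<i> * of_real h) - px g (z + of_real x + \<i> * of_real 0)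
      = (h - 0) * py (px g) (z + of_real x + \<i> * of_real y)"
    using diff x by (intro MVT2 h has_real_derivative_py_line) auto
  then obtain y where y: "0 < y" "y < h" and Dy: "px g (z + of_real x + \<i> * of_real h) - px g (z + of_real x)
      = h * py (px g) (z + of_real x + \<i> * of_real y)"
    by auto
  show ?thesis
    using x y by (intro bexI[of _ x] bexI[of _ y]) (auto simp: Dx Dy power2_eq_square)
qed

lemma second_difference_py_px:
  fixes g :: "complex \<Rightarrow> real"
  assumes h: "h > 0"
    and diff: "\<And>x y. x \<in> {0..h} \<Longrightarrow> y \<in> {0..h} \<Longrightarrow>
      g differentiable (at (z + of_real x + \<i> * of_real y)) \<and>
      py g differentiable (at (z + of_real x + \<i> * of_real y))"
  shows "\<exists>x\<in>{0<..<h}. \<exists>y\<in>{0<..<h}. g (z + of_real h + \<i> * of_real h) - g (z + \<i> * of_real h)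
    - g (z + of_real h) + g z = h\<^sup>2 * px (py g) (z + of_real x + \<i> * of_real y)"
proof -
  have "\<exists>y. 0 < y \<and> y < h \<and>
      (g (z + of_real h + \<i> * of_real h) - g (z + \<i> * of_real h))
        - (g (z + of_real h + \<i> * of_real 0) - g (z + \<i> * of_real 0))
      = (h - 0) * (py g (z + of_real h + \<i> * of_real y) - py g (z + \<i> * of_real y))"
    using diff[of 0] diff[of h] h
    by (intro MVT2 h DERIV_diff has_real_derivative_py_line) (auto simp: ac_simps)
  then obtain y where y: "0 < y" "y < h"
    and Dy: "g (z + of_real h + \<i> * of_real h) - g (z + \<i> * of_real h) - g (z + of_real h) + g z
      = h * (py g (z + of_real h + \<i> * of_real y) - py g (z + \<i> * of_real y))"
    by (auto simp: algebra_simps)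
  have "\<exists>x. 0 < x \<and> x < h \<and> py g (z + \<i> * of_real y + of_real h) - py g (z + \<i> * of_real y + of_real 0)
      = (h - 0) * px (py g) (z + \<i> * of_real y + of_real x)"
    using diff y by (intro MVT2 h has_real_derivative_px_line) (auto simp: ac_simps)
  then obtain x where x: "0 < x" "x < h" and Dx: "py g (z + of_real h + \<i> * of_real y) - py g (z + \<i> * of_real y)
      = h * px (py g) (z + of_real x + \<i> * of_real y)"
    by (auto simp: ac_simps)
  show ?thesis
    using x y by (intro bexI[of _ x] bexI[of _ y]) (auto simp: Dx Dy power2_eq_square)
qed

lemma py_px_commute:
  fixes g :: "complex \<Rightarrow> real"
  assumes S: "open S" and g: "C2_on S g" and z: "z \<in> S"
  shows "py (px g) z = px (py g) z"
proof (rule ccontr)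
  define d where "d = dist (py (px g) z) (px (py g) z)"
  assume "py (px g) z \<noteq> px (py g) z"
  then have d: "d / 2 > 0"
    by (simp add: d_def)
  have cont: "continuous (at z) (py (px g))" "continuous (at z) (px (py g))"
    using g S z by (auto simp: C2_on_def C1_on_def continuous_on_eq_continuous_at)
  obtain \<delta> where \<delta>: "\<delta> > 0" "ball z \<delta> \<subseteq> S"
    and near: "\<And>w. w \<in> ball z \<delta> \<Longrightarrow>
      dist (py (px g) w) (py (px g) z) < d / 2 \<and> dist (px (py g) w) (px (py g) z) < d / 2"
  proof -
    obtain d0 where "d0 > 0" "ball z d0 \<subseteq> S"
      using S z openE by blast
    moreover obtain d1 where "d1 > 0" "\<forall>w. dist w z < d1 \<longrightarrow> dist (py (px g) w) (py (px g) z) < d / 2"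
      using cont(1) d unfolding continuous_at_eps_delta by blast
    moreover obtain d2 where "d2 > 0" "\<forall>w. dist w z < d2 \<longrightarrow> dist (px (py g) w) (px (py g) z) < d / 2"
      using cont(2) d unfolding continuous_at_eps_delta by blast
    ultimately show ?thesis
      by (intro that[of "min d0 (min d1 d2)"]) (auto simp: dist_commute)
  qed
  define h where "h = \<delta> / 3"
  have h: "h > 0"
    using \<delta> by (simp add: h_def)
  have square: "z + of_real x + \<i> * of_real y \<in> ball z \<delta>" if "x \<in> {0..h}" "y \<in> {0..h}" for x y
  proof -
    have "dist z (z + (of_real x + \<i> * of_real y)) = norm (of_real x + \<i> * of_real y)"
      using dist_add_cancel[of z 0] by simp
    also have "\<dots> \<le> \<bar>x\<bar> + \<bar>y\<bar>"
      using norm_triangle_ineq[of "of_real x" "\<i> * of_real y"] by (simp add: norm_mult)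
    finally show ?thesis
      using that \<delta> by (simp add: h_def add.assoc)
  qed
  note diff = C2_on_differentiable[OF g subsetD[OF \<delta>(2) square]]
  obtain x1 y1 where P1: "x1 \<in> {0<..<h}" "y1 \<in> {0<..<h}" and D1: "g (z + of_real h + \<i> * of_real h)
      - g (z + \<i> * of_real h) - g (z + of_real h) + g z = h\<^sup>2 * py (px g) (z + of_real x1 + \<i> * of_real y1)"
    using second_difference_px_py[OF h] diff by blast
  obtain x2 y2 where P2: "x2 \<in> {0<..<h}" "y2 \<in> {0<..<h}" and D2: "g (z + of_real h + \<i> * of_real h)
      - g (z + \<i> * of_real h) - g (z + of_real h) + g z = h\<^sup>2 * px (py g) (z + of_real x2 + \<i> * of_real y2)"
    using second_difference_py_px[OF h] diff by blast
  have same: "py (px g) (z + of_real x1 + \<i> * of_real y1) = px (py g) (z + of_real x2 + \<i> * of_real y2)"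
    using D1 D2 h by simp
  have "dist (py (px g) (z + of_real x1 + \<i> * of_real y1)) (py (px g) z) < d / 2"
    using near[OF square[of x1 y1]] P1 by auto
  then have "dist (py (px g) z) (px (py g) (z + of_real x2 + \<i> * of_real y2)) < d / 2"
    by (simp only: same dist_commute)
  moreover have "dist (px (py g) (z + of_real x2 + \<i> * of_real y2)) (px (py g) z) < d / 2"
    using near[OF square[of x2 y2]] P2 by auto
  then have "dist (px (py g) z) (px (py g) (z + of_real x2 + \<i> * of_real y2)) < d / 2"
    by (simp only: dist_commute)
  ultimately have "dist (py (px g) z) (px (py g) z) < d"
    by (rule dist_triangle_half_l)
  then show False
    by (simp add: d_def)
qed

section \<open>The Laplacian and the Liouville substitution\<close>

definition laplacian :: "(complex \<Rightarrow> real) \<Rightarrow> complex \<Rightarrow> real" where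
  "laplacian g z = px (px g) z + py (py g) z"

lemma laplacian_inverse:
  fixes f :: "complex \<Rightarrow> real"
  assumes S: "open S" and f: "C2_on S f" and nz: "\<forall>w\<in>S. f w \<noteq> 0" and z: "z \<in> S"
  shows "laplacian (\<lambda>w. 1 / f w) z = 2 * ((px f z)\<^sup>2 + (py f z)\<^sup>2) / f z ^ 3 - laplacian f z / (f z)\<^sup>2"
proof -
  note D = C2_on_differentiable[OF f]
  have inv: "px (\<lambda>w. 1 / f w) w = - px f w / (f w)\<^sup>2" "py (\<lambda>w. 1 / f w) w = - py f w / (f w)\<^sup>2"
    if "w \<in> S" for w
    using px_divide[of "\<lambda>_. 1" w f] py_divide[of "\<lambda>_. 1" w f] D[OF that] nz that by simp_all
  have "px (px (\<lambda>w. 1 / f w)) z = px (\<lambda>w. - px f w / (f w)\<^sup>2) z"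
    by (rule px_cong[OF S z inv(1)])
  also have "\<dots> = (px (\<lambda>w. - px f w) z * (f z)\<^sup>2 - (- px f z) * px (\<lambda>w. (f w)\<^sup>2) z) / ((f z)\<^sup>2)\<^sup>2"
    using D[OF z] nz z by (intro px_divide) simp_all
  also have "\<dots> = 2 * (px f z)\<^sup>2 / f z ^ 3 - px (px f) z / (f z)\<^sup>2"
    using D[OF z] nz z by (simp add: px_minus px_power) (simp add: field_simps eval_nat_numeral)
  finally have xx: "px (px (\<lambda>w. 1 / f w)) z = 2 * (px f z)\<^sup>2 / f z ^ 3 - px (px f) z / (f z)\<^sup>2" .
  have "py (py (\<lambda>w. 1 / f w)) z = py (\<lambda>w. - py f w / (f w)\<^sup>2) z"
    by (rule py_cong[OF S z inv(2)])
  also have "\<dots> = (py (\<lambda>w. - py f w) z * (f z)\<^sup>2 - (- py f z) * py (\<lambda>w. (f w)\<^sup>2) z) / ((f z)\<^sup>2)\<^sup>2"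
    using D[OF z] nz z by (intro py_divide) simp_all
  also have "\<dots> = 2 * (py f z)\<^sup>2 / f z ^ 3 - py (py f) z / (f z)\<^sup>2"
    using D[OF z] nz z by (simp add: py_minus py_power) (simp add: field_simps eval_nat_numeral)
  finally have yy: "py (py (\<lambda>w. 1 / f w)) z = 2 * (py f z)\<^sup>2 / f z ^ 3 - py (py f) z / (f z)\<^sup>2" .
  show ?thesis
    by (simp add: laplacian_def xx yy add_divide_distrib diff_divide_distrib)
qed

definition liouville_potential :: "(complex \<Rightarrow> real) \<Rightarrow> (complex \<Rightarrow> real) \<Rightarrow> complex \<Rightarrow> real" where
  "liouville_potential a b z = laplacian (\<lambda>w. sqrt (a w)) z / sqrt (a z) - b z / a z"

lemma div_grad_op_div_sqrt:
  fixes a b \<phi> :: "complex \<Rightarrow> real"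
  assumes S: "open S" and a: "C2_on S a" and pos: "\<forall>w\<in>S. a w > 0"
    and \<phi>: "C2_on S \<phi>" and z: "z \<in> S"
  shows "div_grad_op a b (\<lambda>w. \<phi> w / sqrt (a w)) z =
    sqrt (a z) * (laplacian \<phi> z - liouville_potential a b z * \<phi> z)"
proof -
  define s where "s w = sqrt (a w)" for w
  have s: "C2_on S s"
    unfolding s_def using C2_on_sqrt[OF S a pos] .
  have s_pos: "s w > 0" and a_eq: "a w = (s w)\<^sup>2" if "w \<in> S" for w
    using pos[rule_format, OF that] by (simp_all add: s_def)
  note Ds = C2_on_differentiable[OF s] and D\<phi> = C2_on_differentiable[OF \<phi>]
  have flux: "a w * px (\<lambda>w. \<phi> w / s w) w = s w * px \<phi> w - \<phi> w * px s w"
    "a w * py (\<lambda>w. \<phi> w / s w) w = s w * py \<phi> w - \<phi> w * py s w" if "w \<in> S" for w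
    using Ds[OF that] D\<phi>[OF that] s_pos[OF that] a_eq[OF that]
    by (simp_all add: px_divide py_divide field_simps power2_eq_square)
  have "px (\<lambda>w. a w * px (\<lambda>w. \<phi> w / s w) w) z = px (\<lambda>w. s w * px \<phi> w - \<phi> w * px s w) z"
    by (rule px_cong[OF S z flux(1)])
  also have "\<dots> = s z * px (px \<phi>) z - \<phi> z * px (px s) z"
    using Ds[OF z] D\<phi>[OF z] by (simp add: px_diff px_mult)
  finally have xx: "px (\<lambda>w. a w * px (\<lambda>w. \<phi> w / s w) w) z = s z * px (px \<phi>) z - \<phi> z * px (px s) z" .
  have "py (\<lambda>w. a w * py (\<lambda>w. \<phi> w / s w) w) z = py (\<lambda>w. s w * py \<phi> w - \<phi> w * py s w) z"
    by (rule py_cong[OF S z flux(2)])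
  also have "\<dots> = s z * py (py \<phi>) z - \<phi> z * py (py s) z"
    using Ds[OF z] D\<phi>[OF z] by (simp add: py_diff py_mult)
  finally have yy: "py (\<lambda>w. a w * py (\<lambda>w. \<phi> w / s w) w) z = s z * py (py \<phi>) z - \<phi> z * py (py s) z" .
  have "div_grad_op a b (\<lambda>w. \<phi> w / s w) z = s z * laplacian \<phi> z - \<phi> z * laplacian s z + b z * (\<phi> z / s z)"
    unfolding div_grad_op_def xx yy laplacian_def by (simp add: algebra_simps)
  also have "\<dots> = s z * (laplacian \<phi> z - (laplacian s z / s z - b z / a z) * \<phi> z)"
    using s_pos[OF z] a_eq[OF z] by (simp add: field_simps power2_eq_square)
  finally show ?thesis
    unfolding s_def[abs_def] liouville_potential_def .
qed

lemma laplacian_sqrt_mult_solution: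
  fixes a b u :: "complex \<Rightarrow> real"
  assumes S: "open S" and a: "C2_on S a" and pos: "\<forall>w\<in>S. a w > 0" and u: "C2_on S u"
    and z: "z \<in> S" and sol: "div_grad_op a b u z = 0"
  shows "laplacian (\<lambda>w. sqrt (a w) * u w) z = liouville_potential a b z * (sqrt (a z) * u z)"
proof -
  have "div_grad_op a b u z = div_grad_op a b (\<lambda>w. sqrt (a w) * u w / sqrt (a w)) z"
    by (rule div_grad_op_cong[OF S z]) (use pos in auto)
  with sol div_grad_op_div_sqrt[OF S a pos C2_on_mult[OF S C2_on_sqrt[OF S a pos] u] z, of b] pos z
  show ?thesis
    by auto
qed

lemma liouville_potential_reciprocal:
  fixes a b u :: "complex \<Rightarrow> real"
  assumes S: "open S" and a: "C2_on S a" and a_pos: "\<forall>w\<in>S. a w > 0"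
    and u: "C2_on S u" and u_pos: "\<forall>w\<in>S. u w > 0" and z: "z \<in> S" and sol: "div_grad_op a b u z = 0"
  shows "liouville_potential (\<lambda>w. 1 / a w)
      (\<lambda>w. - (1 / a w) * (b w / a w + 2 * ((px a w / a w) * (px u w / u w) + (py a w / a w) * (py u w / u w))
        + 2 * ((px u w / u w)\<^sup>2 + (py u w / u w)\<^sup>2))) z
    = sqrt (a z) * u z * laplacian (\<lambda>w. 1 / (sqrt (a w) * u w)) z"
proof -
  define s where "s w = sqrt (a w)" for w
  define f where "f w = s w * u w" for w
  have s: "C2_on S s" and f: "C2_on S f"
    using C2_on_sqrt[OF S a a_pos] C2_on_mult[OF S _ u] unfolding s_def[abs_def] f_def[abs_def] by blast+
  have s_nz: "\<forall>w\<in>S. s w \<noteq> 0" and f_nz: "\<forall>w\<in>S. f w \<noteq> 0"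
    using a_pos u_pos by (auto simp: s_def f_def)
  have sz: "s z > 0" "a z = (s z)\<^sup>2" and uz: "u z > 0"
    using a_pos[rule_format, OF z] u_pos[rule_format, OF z] by (simp_all add: s_def)
  note Da = C2_on_differentiable(1)[OF a z] and Du = C2_on_differentiable(1)[OF u z]
  have grad_s: "px s z = px a z / (2 * s z)" "py s z = py a z / (2 * s z)"
    unfolding s_def[abs_def] using Da a_pos z by (simp_all add: px_sqrt py_sqrt s_def)
  have grad_f: "px f z = s z * px u z + px s z * u z" "py f z = s z * py u z + py s z * u z"
    unfolding f_def[abs_def] using C2_on_differentiable(1)[OF s z] Du by (simp_all add: px_mult py_mult)
  have ground: "laplacian f z = (laplacian s z / s z - b z / a z) * f z"
    using laplacian_sqrt_mult_solution[OF S a a_pos u z sol]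
    unfolding f_def[abs_def] s_def[abs_def] liouville_potential_def by simp
  have "(\<lambda>w. sqrt (1 / a w)) = (\<lambda>w. 1 / s w)"
    by (simp add: fun_eq_iff s_def real_sqrt_divide)
  then have "liouville_potential (\<lambda>w. 1 / a w)
      (\<lambda>w. - (1 / a w) * (b w / a w + 2 * ((px a w / a w) * (px u w / u w) + (py a w / a w) * (py u w / u w))
        + 2 * ((px u w / u w)\<^sup>2 + (py u w / u w)\<^sup>2))) z
    = s z * laplacian (\<lambda>w. 1 / s w) z + (b z / a z + 2 * ((px a z / a z) * (px u z / u z)
        + (py a z / a z) * (py u z / u z)) + 2 * ((px u z / u z)\<^sup>2 + (py u z / u z)\<^sup>2))"
    using sz by (simp add: liouville_potential_def real_sqrt_divide)
  (* After expanding both reciprocal Laplacians, Delta s and Delta f enter only through the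
     ground-state relation; what is left are first-order terms, and these are the ones collected in q1. *)
  also have "\<dots> = f z * laplacian (\<lambda>w. 1 / f w) z"
    unfolding laplacian_inverse[OF S s s_nz z] laplacian_inverse[OF S f f_nz z] ground grad_f grad_s
    using sz uz by (simp add: f_def field_simps power2_eq_square power3_eq_cube)
  finally show ?thesis
    by (simp add: f_def[abs_def] s_def[abs_def])
qed

section \<open>The Vekua equation\<close>

lemma vekua_real_form:
  fixes W :: "complex \<Rightarrow> complex" and f :: "complex \<Rightarrow> real"
  assumes W: "W differentiable (at z)" and f: "f differentiable (at z)" and nz: "f z \<noteq> 0"
    and eq: "dbar W z = dbar (\<lambda>w. complex_of_real (f w)) z / complex_of_real (f z) * cnj (W z)"
  shows "px (\<lambda>w. Re (W w)) z - py (\<lambda>w. Im (W w)) z = px f z / f z * Re (W z) + py f z / f z * Im (W z)"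
    and "py (\<lambda>w. Re (W w)) z + px (\<lambda>w. Im (W w)) z = py f z / f z * Re (W z) - px f z / f z * Im (W z)"
proof -
  have dbar_f: "dbar (\<lambda>w. complex_of_real (f w)) z = (of_real (px f z) + \<i> * of_real (py f z)) / 2"
    by (simp add: dbar_def px_bounded_linear[OF bounded_linear_of_real f]
        py_bounded_linear[OF bounded_linear_of_real f])
  have "px W z + \<i> * py W z = (of_real (px f z) + \<i> * of_real (py f z)) / of_real (f z) * cnj (W z)"
    using eq unfolding dbar_f by (simp add: dbar_def)
  then have "Re (px W z) - Im (py W z) = (px f z * Re (W z) + py f z * Im (W z)) / f z"
    "Im (px W z) + Re (py W z) = (py f z * Re (W z) - px f z * Im (W z)) / f z"
    using nz by (simp_all add: complex_eq_iff field_simps)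
  then show "px (\<lambda>w. Re (W w)) z - py (\<lambda>w. Im (W w)) z = px f z / f z * Re (W z) + py f z / f z * Im (W z)"
    and "py (\<lambda>w. Re (W w)) z + px (\<lambda>w. Im (W w)) z = py f z / f z * Re (W z) - px f z / f z * Im (W z)"
    by (simp_all add: px_bounded_linear[OF bounded_linear_Re W] py_bounded_linear[OF bounded_linear_Re W]
        px_bounded_linear[OF bounded_linear_Im W] py_bounded_linear[OF bounded_linear_Im W]
        add_divide_distrib diff_divide_distrib)
qed

lemma laplacian_first_order_system:
  fixes A B a b :: "complex \<Rightarrow> real"
  assumes S: "open S" and z: "z \<in> S" and A: "C2_on S A" and B: "C2_on S B"
    and a: "a differentiable (at z)" and b: "b differentiable (at z)" and curl: "py a z = px b z"
    and sys1: "\<And>w. w \<in> S \<Longrightarrow> px A w - py B w = a w * A w + b w * B w"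
    and sys2: "\<And>w. w \<in> S \<Longrightarrow> py A w + px B w = b w * A w - a w * B w"
  shows "laplacian A z = (px a z + py b z + (a z)\<^sup>2 + (b z)\<^sup>2) * A z"
    and "laplacian B z = ((a z)\<^sup>2 + (b z)\<^sup>2 - px a z - py b z) * B z"
proof -
  note D = C2_on_differentiable[OF A z] C2_on_differentiable[OF B z] a b
  have "px (\<lambda>w. px A w - py B w) z = px (\<lambda>w. a w * A w + b w * B w) z"
    "py (\<lambda>w. px A w - py B w) z = py (\<lambda>w. a w * A w + b w * B w) z"
    by (rule px_cong[OF S z] py_cong[OF S z]; erule sys1)+
  then have E1x: "px (px A) z - px (py B) z = a z * px A z + px a z * A z + b z * px B z + px b z * B z"
    and E1y: "py (px A) z - py (py B) z = a z * py A z + py a z * A z + b z * py B z + py b z * B z"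
    using D by (simp_all add: px_diff py_diff px_add py_add px_mult py_mult)
  have "px (\<lambda>w. py A w + px B w) z = px (\<lambda>w. b w * A w - a w * B w) z"
    "py (\<lambda>w. py A w + px B w) z = py (\<lambda>w. b w * A w - a w * B w) z"
    by (rule px_cong[OF S z] py_cong[OF S z]; erule sys2)+
  then have E2x: "px (py A) z + px (px B) z = b z * px A z + px b z * A z - a z * px B z - px a z * B z"
    and E2y: "py (py A) z + py (px B) z = b z * py A z + py b z * A z - a z * py B z - py a z * B z"
    using D by (simp_all add: px_diff py_diff px_add py_add px_mult py_mult)
  have symA: "py (px A) z = px (py A) z" and symB: "py (px B) z = px (py B) z"
    using py_px_commute[OF S A z] py_px_commute[OF S B z] .
  have "laplacian A z = (px a z + py b z) * A z + a z * (px A z - py B z) + b z * (py A z + px B z)"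
    unfolding laplacian_def using E1x E2y symB curl by (simp add: algebra_simps)
  also have "\<dots> = (px a z + py b z + (a z)\<^sup>2 + (b z)\<^sup>2) * A z"
    unfolding sys1[OF z] sys2[OF z] by (simp add: algebra_simps power2_eq_square)
  finally show "laplacian A z = (px a z + py b z + (a z)\<^sup>2 + (b z)\<^sup>2) * A z" .
  have "laplacian B z = - (px a z + py b z) * B z + b z * (px A z - py B z) - a z * (py A z + px B z)"
    unfolding laplacian_def using E2x E1y symA curl by (simp add: algebra_simps)
  also have "\<dots> = ((a z)\<^sup>2 + (b z)\<^sup>2 - px a z - py b z) * B z"
    unfolding sys1[OF z] sys2[OF z] by (simp add: algebra_simps power2_eq_square)
  finally show "laplacian B z = ((a z)\<^sup>2 + (b z)\<^sup>2 - px a z - py b z) * B z" .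
qed

lemma laplacian_vekua:
  fixes f A B :: "complex \<Rightarrow> real"
  assumes S: "open S" and z: "z \<in> S" and f: "C2_on S f" and nz: "\<forall>w\<in>S. f w \<noteq> 0"
    and A: "C2_on S A" and B: "C2_on S B"
    and sys1: "\<And>w. w \<in> S \<Longrightarrow> px A w - py B w = px f w / f w * A w + py f w / f w * B w"
    and sys2: "\<And>w. w \<in> S \<Longrightarrow> py A w + px B w = py f w / f w * A w - px f w / f w * B w"
  shows "laplacian A z = laplacian f z / f z * A z"
    and "laplacian B z = f z * laplacian (\<lambda>w. 1 / f w) z * B z"
proof -
  note D = C2_on_differentiable[OF f z] and fz = nz[rule_format, OF z]
  have diff: "(\<lambda>w. px f w / f w) differentiable (at z)" "(\<lambda>w. py f w / f w) differentiable (at z)"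
    using D fz by simp_all
  have a_x: "px (\<lambda>w. px f w / f w) z = (px (px f) z * f z - px f z * px f z) / (f z)\<^sup>2"
    and a_y: "py (\<lambda>w. px f w / f w) z = (py (px f) z * f z - px f z * py f z) / (f z)\<^sup>2"
    and b_x: "px (\<lambda>w. py f w / f w) z = (px (py f) z * f z - py f z * px f z) / (f z)\<^sup>2"
    and b_y: "py (\<lambda>w. py f w / f w) z = (py (py f) z * f z - py f z * py f z) / (f z)\<^sup>2"
    using D fz by (simp_all add: px_divide py_divide)
  have curl: "py (\<lambda>w. px f w / f w) z = px (\<lambda>w. py f w / f w) z"
    unfolding a_y b_x py_px_commute[OF S f z] by (simp add: mult.commute)
  note L = laplacian_first_order_system[OF S z A B diff curl sys1 sys2]
  have "px (\<lambda>w. px f w / f w) z + py (\<lambda>w. py f w / f w) z + (px f z / f z)\<^sup>2 + (py f z / f z)\<^sup>2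
      = laplacian f z / f z"
    unfolding a_x b_y laplacian_def using fz by (simp add: field_simps power2_eq_square)
  then show "laplacian A z = laplacian f z / f z * A z"
    using L(1) by simp
  have "(px f z / f z)\<^sup>2 + (py f z / f z)\<^sup>2 - px (\<lambda>w. px f w / f w) z - py (\<lambda>w. py f w / f w) z
      = f z * laplacian (\<lambda>w. 1 / f w) z"
    unfolding a_x b_y laplacian_inverse[OF S f nz z] using fz
    by (simp add: laplacian_def field_simps power2_eq_square power3_eq_cube)
  then show "laplacian B z = f z * laplacian (\<lambda>w. 1 / f w) z * B z"
    using L(2) by simp
qed

theorem mainTheorem7:
  fixes \<Omega> :: "complex set" and p q u0 :: "complex \<Rightarrow> real" and W :: "complex \<Rightarrow> complex"
  assumes dom: "open \<Omega>" "connected \<Omega>" "\<Omega> \<noteq> {}"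
    and p_C2: "C2_on \<Omega> p" and p_pos: "\<forall>z\<in>\<Omega>. p z > 0"
    and u0_C2: "C2_on \<Omega> u0" and u0_pos: "\<forall>z\<in>\<Omega>. u0 z > 0"
    and u0_sol: "\<forall>z\<in>\<Omega>. div_grad_op p q u0 z = 0"
    and W_C2: "C2_on \<Omega> W"
    and W_eq: "\<forall>z\<in>\<Omega>. dbar W z =
       dbar (\<lambda>w. complex_of_real (sqrt (p w) * u0 w)) z
         / complex_of_real (sqrt (p z) * u0 z) * cnj (W z)"
  shows "(\<forall>z\<in>\<Omega>. div_grad_op p q (\<lambda>w. Re (W w) / sqrt (p w)) z = 0) \<and>
         (\<forall>z\<in>\<Omega>. div_grad_op (\<lambda>w. 1 / p w)
           (\<lambda>w. - (1 / p w) * (q w / p w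
              + 2 * ((px p w / p w) * (px u0 w / u0 w) + (py p w / p w) * (py u0 w / u0 w))
              + 2 * ((px u0 w / u0 w)\<^sup>2 + (py u0 w / u0 w)\<^sup>2)))
           (\<lambda>w. sqrt (p w) * Im (W w)) z = 0)"
  (is "_ \<and> (\<forall>z\<in>\<Omega>. div_grad_op _ ?q1 _ z = 0)")
proof -
  (* Both claims are pointwise. *)
  note S = dom(1)
  define f where "f w = sqrt (p w) * u0 w" for w
  have f: "C2_on \<Omega> f"
    using C2_on_mult[OF S C2_on_sqrt[OF S p_C2 p_pos] u0_C2] unfolding f_def[abs_def] .
  have f_nz: "\<forall>w\<in>\<Omega>. f w \<noteq> 0"
    using p_pos u0_pos by (auto simp: f_def)
  have A: "C2_on \<Omega> (\<lambda>w. Re (W w))" and B: "C2_on \<Omega> (\<lambda>w. Im (W w))"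
    using C2_on_bounded_linear[OF S bounded_linear_Re W_C2] C2_on_bounded_linear[OF S bounded_linear_Im W_C2] .
  have sys: "px (\<lambda>w. Re (W w)) w - py (\<lambda>w. Im (W w)) w = px f w / f w * Re (W w) + py f w / f w * Im (W w)"
    "py (\<lambda>w. Re (W w)) w + px (\<lambda>w. Im (W w)) w = py f w / f w * Re (W w) - px f w / f w * Im (W w)"
    if "w \<in> \<Omega>" for w
    using vekua_real_form[OF C2_on_differentiable(1)[OF W_C2 that] C2_on_differentiable(1)[OF f that]
        f_nz[rule_format, OF that] W_eq[folded f_def, rule_format, OF that]] .
  note L = laplacian_vekua[OF S _ f f_nz A B sys]
  show ?thesis
  proof (intro conjI ballI)
    fix z assume z: "z \<in> \<Omega>"
    have "laplacian f z = liouville_potential p q z * f z"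
      using laplacian_sqrt_mult_solution[OF S p_C2 p_pos u0_C2 z] u0_sol z by (simp add: f_def[abs_def])
    then show "div_grad_op p q (\<lambda>w. Re (W w) / sqrt (p w)) z = 0"
      using div_grad_op_div_sqrt[OF S p_C2 p_pos A z, of q] L(1)[OF z] f_nz z by auto
    have "(\<lambda>w. sqrt (p w) * Im (W w)) = (\<lambda>w. Im (W w) / sqrt (1 / p w))"
      by (simp add: fun_eq_iff real_sqrt_divide)
    moreover have "\<forall>w\<in>\<Omega>. 1 / p w > 0"
      using p_pos by simp
    ultimately show "div_grad_op (\<lambda>w. 1 / p w) ?q1 (\<lambda>w. sqrt (p w) * Im (W w)) z = 0"
      using div_grad_op_div_sqrt[OF S C2_on_inverse[OF S p_C2 p_pos] _ B z, of ?q1] L(2)[OF z]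
        liouville_potential_reciprocal[OF S p_C2 p_pos u0_C2 u0_pos z] u0_sol z
      by (simp add: f_def[abs_def])
  qed
qed

end
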